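(* Consider the following insertion-only procedure for maintaining a coloring of a set $S$ of objects, where $S$ is partitioned into sets $S_0,\ldots,S_\ell$, $\ell=\lceil\log n\rceil$, each in one of the states empty, full, or in migration, and where for each $i$ there are $\ell-i+1$ color sets $C(i,t)$, $0\le t\le \ell-i$, each of $\gamma_{\mathrm{um}}(2^i)$ colors. To insert an object $s$: (1) let $i$ be the smallest index with $S_i$ empty (if $i=\ell+1$ a new set is introduced and $\ell$ is redefined); (2) set $S_i:=\{s\}\cup S_0\cup\cdots\cup S_{i-1}$, mark $S_0,\ldots,S_{i-1}$ empty and $S_i$ in migration; (3) take an unused color set $C(i,t)$ and compute a unimax coloring of $S_i$ with it, whose colors are called final colors; only $s$ is given its final color now; (4) for each set $S_k$ in migration, recolor to its final color one object of $S_k$ whose current color differs from its final color and whose final color is maximal among such objects; if all objects of $S_k$ now have their final color, mark $S_k$ full. Then in step (3), at least one of the color sets $C(i,t)$ with $0\le t\le\ell-i$ is currently unused (i.e., not currently assigned as the color of any object of $S$).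
   Context: Initially $S$ is empty and all sets are empty. A unimax coloring of a set of objects (regions with respect to points, or points with respect to ranges) is a coloring by integers such that for every point (resp. range) $q$ related to at least one object, the maximum color among the objects related to $q$ is attained by exactly one of them. $\gamma_{\mathrm{um}}$ is a non-decreasing function such that every $m$ objects of the family admit a unimax coloring with $\gamma_{\mathrm{um}}(m)$ colors. *)

theory Defs
  imports Main
begin

definition unimax :: "('q \<Rightarrow> 'x \<Rightarrow> bool) \<Rightarrow> 'x set \<Rightarrow> ('x \<Rightarrow> nat) \<Rightarrow> bool" where
  "unimax R X f \<longleftrightarrow>
     (\<forall>q. (\<exists>x\<in>X. R q x) \<longrightarrow>
        (\<exists>x\<in>X. R q x \<and> (\<forall>y\<in>X. R q y \<and> y \<noteq> x \<longrightarrow> f y < f x)))"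

datatype status = Empty | Full | Migr

text \<open>A colour is a triple (i, t, c): the c-th colour (c < gamma(2^i)) of the colour set C(i,t).
  The order of colours inside a colour set is the order of c.\<close>
type_synonym color = "nat \<times> nat \<times> nat"

record 'x state =
  lev :: nat
  sets :: "nat \<Rightarrow> 'x set"
  status :: "nat \<Rightarrow> status"
  cur :: "'x \<Rightarrow> color"
  fin :: "'x \<Rightarrow> color"

definition objs :: "'x state \<Rightarrow> 'x set" where
  "objs st = (\<Union>j\<le>lev st. sets st j)"

definition used :: "'x state \<Rightarrow> nat \<Rightarrow> nat \<Rightarrow> bool" where
  "used st i t \<longleftrightarrow> (\<exists>x\<in>objs st. \<exists>c. cur st x = (i, t, c))"

definition init_state :: "nat \<Rightarrow> 'x state" where
  "init_state l0 = \<lparr>lev = l0, sets = (\<lambda>_. {}), status = (\<lambda>_. Empty),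
                    cur = (\<lambda>_. undefined), fin = (\<lambda>_. undefined)\<rparr>"

text \<open>Step (1): smallest index of an empty set (equals lev+1 if S_0..S_lev are non-empty).\<close>
definition first_empty :: "'x state \<Rightarrow> nat" where
  "first_empty st = (LEAST i. status st i = Empty)"

text \<open>One insertion of object s, as a (nondeterministic) relation between the state before
  and after: choice of an unused colour set C(i,t), of the unimax colouring, and of the
  objects recoloured in step (4) among those with maximal final colour.\<close>
definition ins :: "('q \<Rightarrow> 'x \<Rightarrow> bool) \<Rightarrow> (nat \<Rightarrow> nat) \<Rightarrow> 'x \<Rightarrow> 'x state \<Rightarrow> 'x state \<Rightarrow> bool" where
  "ins R \<gamma> s st st'' \<longleftrightarrow>
    (let i = first_empty st;
         L = max (lev st) i;
         Si = insert s (\<Union>j<i. sets st j);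
         sets' = (\<lambda>k. if k < i then {} else if k = i then Si else sets st k);
         status' = (\<lambda>k. if k < i then Empty else if k = i then Migr else status st k)
     in \<exists>t f pick.
          t \<le> L - i \<and> \<not> used st i t \<and>
          unimax R Si f \<and> f ` Si \<subseteq> {0..<\<gamma> (2 ^ i)} \<and>
          (let fin' = (\<lambda>x. if x \<in> Si then (i, t, f x) else fin st x);
               cur' = (cur st)(s := (i, t, f s));
               cur'' = (\<lambda>x. if (\<exists>k. pick k = Some x) then fin' x else cur' x)
           in (\<forall>k. (if status' k = Migr \<and> (\<exists>x\<in>sets' k. cur' x \<noteq> fin' x)
                    then (\<exists>x. pick k = Some x \<and> x \<in> sets' k \<and> cur' x \<noteq> fin' x \<and>
                             (\<forall>y\<in>sets' k. cur' y \<noteq> fin' y \<longrightarrow>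
                                 snd (snd (fin' y)) \<le> snd (snd (fin' x))))
                    else pick k = None)) \<and>
              st'' = \<lparr>lev = L, sets = sets',
                      status = (\<lambda>k. if status' k = Migr \<and> (\<forall>x\<in>sets' k. cur'' x = fin' x)
                                    then Full else status' k),
                      cur = cur'', fin = fin'\<rparr>))"

inductive reach :: "('q \<Rightarrow> 'x \<Rightarrow> bool) \<Rightarrow> (nat \<Rightarrow> nat) \<Rightarrow> nat \<Rightarrow> 'x state \<Rightarrow> bool"
  for R \<gamma> l0 where
  reach_init: "reach R \<gamma> l0 (init_state l0)"
| reach_step: "reach R \<gamma> l0 st \<Longrightarrow> s \<notin> objs st \<Longrightarrow> ins R \<gamma> s st st' \<Longrightarrow> reach R \<gamma> l0 st'"

end

theory Submission
  imports Defs
begin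

text \<open>Every reachable state satisfies an invariant: S_k has 2^k elements; the colours
  of S_k come from one colour set per level j \<le> k, its final colours from level k; and a
  migrating S_k has at least one and at most 2^k - 1 - |S_0 \<union> ... \<union> S_(k-1)| pending
  objects, because each insertion puts one object below S_k but also finalises one of
  its pending objects.
  Hence, when S_i is the first empty set, S_0, ..., S_(i-1) are full and carry colours of
  their own levels only, so the colour sets of level i can only be occupied by
  S_(i+1), ..., S_\<ell>, at most one each: at most \<ell> - i of the \<ell> - i + 1 sets C(i,t).\<close>

definition lower :: "'x state \<Rightarrow> nat \<Rightarrow> 'x set" where
  "lower st k = (\<Union>j<k. sets st j)"

definition pending :: "'x state \<Rightarrow> nat \<Rightarrow> 'x set" where
  "pending st k = {x \<in> sets st k. cur st x \<noteq> fin st x}"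

text \<open>\<tau> j is the index t of the colour set C(j,t) that S_k draws its level-j colours from.\<close>
definition colours_from :: "'x state \<Rightarrow> nat \<Rightarrow> (nat \<Rightarrow> nat) \<Rightarrow> bool" where
  "colours_from st k \<tau> \<longleftrightarrow> (\<forall>x\<in>sets st k.
     (\<exists>c. fin st x = (k, \<tau> k, c)) \<and> (\<exists>j\<le>k. \<exists>c. cur st x = (j, \<tau> j, c)) \<and>
     (status st k = Full \<longrightarrow> cur st x = fin st x))"

definition invar :: "'x state \<Rightarrow> bool" where
  "invar st \<longleftrightarrow> (\<forall>k>lev st. status st k = Empty) \<and>
     (\<forall>k. status st k = Empty \<longleftrightarrow> sets st k = {}) \<and>
     (\<forall>k. finite (sets st k)) \<and>
     (\<forall>k. sets st k \<noteq> {} \<longrightarrow> card (sets st k) = 2 ^ k) \<and>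
     (\<forall>j k. j \<noteq> k \<longrightarrow> sets st j \<inter> sets st k = {}) \<and>
     (\<forall>k. status st k \<noteq> Empty \<longrightarrow> (\<exists>\<tau>. colours_from st k \<tau>)) \<and>
     (\<forall>k. status st k = Migr \<longrightarrow>
        pending st k \<noteq> {} \<and> card (pending st k) + card (lower st k) \<le> 2 ^ k - 1)"

lemma invarD:
  assumes "invar st"
  shows invar_Empty_above: "\<And>k. lev st < k \<Longrightarrow> status st k = Empty"
    and invar_Empty_iff: "\<And>k. status st k = Empty \<longleftrightarrow> sets st k = {}"
    and invar_finite: "\<And>k. finite (sets st k)"
    and invar_card: "\<And>k. sets st k \<noteq> {} \<Longrightarrow> card (sets st k) = 2 ^ k"
    and invar_disjoint: "\<And>j k. j \<noteq> k \<Longrightarrow> sets st j \<inter> sets st k = {}"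
    and invar_colours_from: "\<And>k. status st k \<noteq> Empty \<Longrightarrow> \<exists>\<tau>. colours_from st k \<tau>"
    and invar_pending_nonempty: "\<And>k. status st k = Migr \<Longrightarrow> pending st k \<noteq> {}"
    and invar_pending_card:
      "\<And>k. status st k = Migr \<Longrightarrow> card (pending st k) + card (lower st k) \<le> 2 ^ k - 1"
  using assms unfolding invar_def by blast+

lemma invar_init: "invar (init_state l0)"
  by (simp add: invar_def init_state_def pending_def lower_def)

lemma card_UN_lessThan_power2:
  fixes A :: "nat \<Rightarrow> 'a set"
  assumes "\<And>j. j < k \<Longrightarrow> finite (A j)" and "\<And>j. j < k \<Longrightarrow> card (A j) = 2 ^ j"
    and "\<And>i j. i < k \<Longrightarrow> j < k \<Longrightarrow> i \<noteq> j \<Longrightarrow> A i \<inter> A j = {}"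
  shows "card (\<Union>j<k. A j) = 2 ^ k - 1"
proof -
  have "card (\<Union>j<k. A j) = (\<Sum>j<k. card (A j))"
    using assms(1,3) by (intro card_UN_disjoint) auto
  also have "\<dots> = (\<Sum>j<k. 2 ^ j)"
    using assms(2) by simp
  also have "\<dots> = 2 ^ k - 1"
    using mask_eq_sum_exp[where 'a = nat, of k] by (simp add: lessThan_def)
  finally show ?thesis .
qed

lemma card_lower:
  assumes "invar st" and "\<And>j. j < k \<Longrightarrow> sets st j \<noteq> {}"
  shows "card (lower st k) = 2 ^ k - 1"
  unfolding lower_def using assms
  by (intro card_UN_lessThan_power2) (auto dest: invarD)

lemma in_objs:
  assumes "invar st" and "x \<in> sets st j"
  shows "x \<in> objs st"
proof -
  have "j \<le> lev st"
    using assms invar_Empty_above[OF assms(1), of j] invar_Empty_iff[OF assms(1), of j]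
    by (metis empty_iff not_le)
  then show ?thesis
    using assms(2) by (auto simp: objs_def)
qed

lemma
  assumes "invar st"
  shows status_first_empty: "status st (first_empty st) = Empty"
    and status_below_first_empty: "\<And>j. j < first_empty st \<Longrightarrow> status st j \<noteq> Empty"
proof -
  have "status st (Suc (lev st)) = Empty"
    using assms by (simp add: invar_Empty_above)
  then show "status st (first_empty st) = Empty"
    unfolding first_empty_def by (rule LeastI)
  show "\<And>j. j < first_empty st \<Longrightarrow> status st j \<noteq> Empty"
    unfolding first_empty_def by (rule not_less_Least)
qed

lemma Full_below_first_empty:
  assumes I: "invar st" and j: "j < first_empty st"
  shows "status st j = Full"
proof (cases "status st j")
  case Migr
  have "finite (pending st j)"
    using invar_finite[OF I] by (simp add: pending_def)
  then have "card (pending st j) \<ge> 1"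
    using invar_pending_nonempty[OF I Migr] by (simp add: Suc_le_eq card_gt_0_iff)
  moreover have "card (lower st j) = 2 ^ j - 1"
    using I j status_below_first_empty[OF I] invar_Empty_iff[OF I]
    by (intro card_lower) auto
  ultimately show ?thesis
    using invar_pending_card[OF I Migr] one_le_power[of 2 j] by simp
qed (use status_below_first_empty[OF I j] in auto)

lemma colours_from_Full:
  assumes "colours_from st k \<tau>" and "status st k = Full" and "x \<in> sets st k"
  shows "\<exists>c. cur st x = (k, \<tau> k, c)"
  using assms unfolding colours_from_def by metis

lemma used_colour_set_above:
  assumes I: "invar st" and "used st (first_empty st) t"
  shows "\<exists>k\<in>{first_empty st<..lev st}. t = (SOME \<tau>. colours_from st k \<tau>) (first_empty st)"
proof -
  define i where "i = first_empty st"
  obtain x c k where x: "cur st x = (i, t, c)" "x \<in> sets st k" "k \<le> lev st"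
    using assms(2) unfolding used_def objs_def i_def by blast
  define \<tau> where "\<tau> = (SOME \<tau>. colours_from st k \<tau>)"
  have "status st k \<noteq> Empty"
    using x(2) invar_Empty_iff[OF I] by auto
  then have \<tau>: "colours_from st k \<tau>"
    unfolding \<tau>_def using invar_colours_from[OF I] by (metis someI_ex)
  then obtain j c' where "j \<le> k" and j: "cur st x = (j, \<tau> j, c')"
    using x(2) unfolding colours_from_def by blast
  have "k \<noteq> i"
    using x(2) status_first_empty[OF I] invar_Empty_iff[OF I] unfolding i_def by auto
  moreover have "\<not> k < i"
  proof
    assume "k < i"
    then have "status st k = Full"
      using Full_below_first_empty[OF I] unfolding i_def by blast
    then show False
      using colours_from_Full[OF \<tau> _ x(2)] x(1) \<open>k < i\<close> by auto
  qed
  ultimately show ?thesis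
    using x j unfolding i_def \<tau>_def by auto
qed

lemma unused_colour_set_exists:
  assumes I: "invar st"
  shows "\<exists>t \<le> max (lev st) (first_empty st) - first_empty st. \<not> used st (first_empty st) t"
proof (rule ccontr)
  define i where "i = first_empty st"
  define g where "g = (\<lambda>k. (SOME \<tau>. colours_from st k \<tau>) i)"
  assume "\<not> ?thesis"
  then have "{..max (lev st) i - i} \<subseteq> g ` {i<..lev st}"
    using used_colour_set_above[OF I] unfolding i_def g_def by blast
  then have "card {..max (lev st) i - i} \<le> card {i<..lev st}"
    by (metis card_image_le card_mono finite_greaterThanAtMost finite_imageI le_trans)
  then show False
    by simp
qed

text \<open>One insertion, with t, f and pick the choices made in steps (3) and (4); mid_status
  and mid_cur describe the state after step (3), new_state the state after step (4).\<close>
locale insertion_data =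
  fixes st :: "'x state" and s :: 'x and t :: nat and f :: "'x \<Rightarrow> nat"
    and pick :: "nat \<Rightarrow> 'x option"
begin

definition i :: nat where
  "i = first_empty st"

definition merged :: "'x set" where
  "merged = insert s (lower st i)"

definition new_sets :: "nat \<Rightarrow> 'x set" where
  "new_sets k = (if k < i then {} else if k = i then merged else sets st k)"

definition mid_status :: "nat \<Rightarrow> status" where
  "mid_status k = (if k < i then Empty else if k = i then Migr else status st k)"

definition new_fin :: "'x \<Rightarrow> color" where
  "new_fin x = (if x \<in> merged then (i, t, f x) else fin st x)"

definition mid_cur :: "'x \<Rightarrow> color" where
  "mid_cur = (cur st)(s := (i, t, f s))"

definition new_cur :: "'x \<Rightarrow> color" where
  "new_cur x = (if \<exists>k. pick k = Some x then new_fin x else mid_cur x)"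

definition new_status :: "nat \<Rightarrow> status" where
  "new_status k = (if mid_status k = Migr \<and> (\<forall>x\<in>new_sets k. new_cur x = new_fin x)
                   then Full else mid_status k)"

definition new_state :: "'x state" where
  "new_state = \<lparr>lev = max (lev st) i, sets = new_sets, status = new_status,
                 cur = new_cur, fin = new_fin\<rparr>"

text \<open>The rule of step (4) that the recoloured object has maximal final colour is
  irrelevant here: any pending object will do.\<close>
definition picks_pending :: bool where
  "picks_pending \<longleftrightarrow> (\<forall>k x. mid_status k = Migr \<longrightarrow> x \<in> new_sets k \<longrightarrow> mid_cur x \<noteq> new_fin x \<longrightarrow>
     (\<exists>p. pick k = Some p \<and> p \<in> new_sets k \<and> mid_cur p \<noteq> new_fin p))"

end

lemma ins_new_state:
  assumes "ins R \<gamma> s st st'"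
  obtains t f pick where "insertion_data.picks_pending st s t f pick"
    and "st' = insertion_data.new_state st s t f pick"
proof -
  from assms obtain t f pick where pick: "\<forall>k. if insertion_data.mid_status st k = Migr \<and>
        (\<exists>x\<in>insertion_data.new_sets st s k.
           insertion_data.mid_cur st s t f x \<noteq> insertion_data.new_fin st s t f x)
      then \<exists>x. pick k = Some x \<and> x \<in> insertion_data.new_sets st s k \<and>
        insertion_data.mid_cur st s t f x \<noteq> insertion_data.new_fin st s t f x \<and>
        (\<forall>y\<in>insertion_data.new_sets st s k.
           insertion_data.mid_cur st s t f y \<noteq> insertion_data.new_fin st s t f y \<longrightarrow>
           snd (snd (insertion_data.new_fin st s t f y)) \<le> snd (snd (insertion_data.new_fin st s t f x)))
      else pick k = None"
    and "st' = insertion_data.new_state st s t f pick"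
    unfolding ins_def Let_def insertion_data.new_state_def insertion_data.new_status_def
      insertion_data.new_cur_def insertion_data.mid_cur_def insertion_data.new_fin_def
      insertion_data.mid_status_def insertion_data.new_sets_def insertion_data.merged_def
      insertion_data.i_def lower_def
    by blast
  moreover from pick have "insertion_data.picks_pending st s t f pick"
    unfolding insertion_data.picks_pending_def by (metis (no_types, lifting))
  ultimately show ?thesis
    using that by blast
qed

locale insertion = insertion_data st s t f pick
  for st :: "'x state" and s :: 'x and t :: nat and f :: "'x \<Rightarrow> nat" and pick +
  assumes invar: "invar st" and fresh: "s \<notin> objs st" and pending_picked: picks_pending
begin

lemma new_cur_cases: "new_cur x = new_fin x \<or> new_cur x = mid_cur x"
  by (simp add: new_cur_def)

lemma exists_finalised_pending:
  assumes "mid_status k = Migr" and "x \<in> new_sets k" and "mid_cur x \<noteq> new_fin x"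
  shows "\<exists>p\<in>new_sets k. mid_cur p \<noteq> new_fin p \<and> new_cur p = new_fin p"
proof -
  obtain p where "pick k = Some p" "p \<in> new_sets k" "mid_cur p \<noteq> new_fin p"
    using pending_picked[unfolded picks_pending_def, rule_format, OF assms] by blast
  moreover from \<open>pick k = Some p\<close> have "new_cur p = new_fin p"
    unfolding new_cur_def by auto
  ultimately show ?thesis
    by blast
qed

lemma new_state_simps [simp]:
  "lev new_state = max (lev st) i" "sets new_state = new_sets" "status new_state = new_status"
  "cur new_state = new_cur" "fin new_state = new_fin"
  by (simp_all add: new_state_def)

lemma sets_i: "sets st i = {}"
  using status_first_empty[OF invar] invar_Empty_iff[OF invar] unfolding i_def by blast

lemma Full_below_i: "j < i \<Longrightarrow> status st j = Full"
  using Full_below_first_empty[OF invar] unfolding i_def .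

lemma sets_below_i: "j < i \<Longrightarrow> sets st j \<noteq> {}"
  using Full_below_i[of j] invar_Empty_iff[OF invar, of j] by auto

lemma s_notin_sets: "s \<notin> sets st k"
  using fresh in_objs[OF invar] by blast

lemma finite_merged: "finite merged"
  using invar_finite[OF invar] by (simp add: merged_def lower_def)

lemma card_merged: "card merged = 2 ^ i"
proof -
  have "card (lower st i) = 2 ^ i - 1"
    using card_lower[OF invar sets_below_i] .
  moreover have "s \<notin> lower st i" and "finite (lower st i)"
    using s_notin_sets invar_finite[OF invar] by (auto simp: lower_def)
  ultimately show ?thesis
    using one_le_power[of 2 i] by (simp add: merged_def)
qed

lemma merged_disjoint_above:
  assumes "i < k"
  shows "merged \<inter> sets st k = {}"
proof -
  have "sets st j \<inter> sets st k = {}" if "j < i" for j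
    using invar_disjoint[OF invar, of j k] that assms by simp
  then show ?thesis
    using s_notin_sets[of k] unfolding merged_def lower_def by blast
qed

lemma unchanged_above:
  assumes "i < k" and "x \<in> sets st k"
  shows "new_fin x = fin st x" and "mid_cur x = cur st x"
  using assms merged_disjoint_above s_notin_sets by (auto simp: new_fin_def mid_cur_def)

lemma new_status_Empty_iff: "new_status k = Empty \<longleftrightarrow> mid_status k = Empty"
  by (simp add: new_status_def)

lemma new_Empty_above: "max (lev st) i < k \<Longrightarrow> new_status k = Empty"
  using invar_Empty_above[OF invar] by (simp add: new_status_Empty_iff mid_status_def)

lemma new_Empty_iff: "new_status k = Empty \<longleftrightarrow> new_sets k = {}"
  using invar_Empty_iff[OF invar, of k]
  by (simp add: new_status_Empty_iff mid_status_def new_sets_def merged_def)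

lemma new_finite: "finite (new_sets k)"
  using invar_finite[OF invar] finite_merged by (simp add: new_sets_def)

lemma new_card: "new_sets k \<noteq> {} \<Longrightarrow> card (new_sets k) = 2 ^ k"
  using invar_card[OF invar, of k] card_merged by (auto simp: new_sets_def split: if_splits)

lemma new_disjoint: "j \<noteq> k \<Longrightarrow> new_sets j \<inter> new_sets k = {}"
  using invar_disjoint[OF invar, of j k] merged_disjoint_above[of j] merged_disjoint_above[of k]
  by (auto simp: new_sets_def)

lemma new_status_Full:
  "new_status k = Full \<Longrightarrow> mid_status k = Full \<or> (\<forall>x\<in>new_sets k. new_cur x = new_fin x)"
  by (auto simp: new_status_def split: if_splits)

lemma new_colours_from_above:
  assumes "i < k" and \<tau>: "colours_from st k \<tau>"
  shows "colours_from new_state k \<tau>"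
  unfolding colours_from_def new_state_simps
proof
  fix x assume "x \<in> new_sets k"
  then have x: "x \<in> sets st k"
    using assms(1) by (simp add: new_sets_def)
  note same = unchanged_above[OF assms(1) x]
  have "\<exists>c. fin st x = (k, \<tau> k, c)" and "\<exists>j\<le>k. \<exists>c. cur st x = (j, \<tau> j, c)"
    and Full: "status st k = Full \<Longrightarrow> cur st x = fin st x"
    using \<tau> x unfolding colours_from_def by blast+
  moreover have "new_cur x = fin st x \<or> new_cur x = cur st x"
    using new_cur_cases[of x] same by simp
  moreover have "new_status k = Full \<Longrightarrow> new_cur x = new_fin x"
    using new_status_Full[of k] Full \<open>x \<in> new_sets k\<close> new_cur_cases[of x] same assms(1)
    by (auto simp: mid_status_def)
  ultimately show "(\<exists>c. new_fin x = (k, \<tau> k, c)) \<and> (\<exists>j\<le>k. \<exists>c. new_cur x = (j, \<tau> j, c)) \<and>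
      (new_status k = Full \<longrightarrow> new_cur x = new_fin x)"
    using same by auto
qed

lemma new_colours_from_merged: "\<exists>\<tau>. colours_from new_state i \<tau>"
proof -
  define \<tau> where "\<tau> j = (if j = i then t else (SOME \<tau>. colours_from st j \<tau>) j)" for j
  have mid_cur_merged: "\<exists>j\<le>i. \<exists>c. mid_cur x = (j, \<tau> j, c)" if x: "x \<in> merged" for x
  proof (cases "x = s")
    case True
    then show ?thesis
      by (simp add: mid_cur_def \<tau>_def)
  next
    case False
    then obtain j where j: "j < i" "x \<in> sets st j"
      using x unfolding merged_def lower_def by blast
    then have "status st j \<noteq> Empty"
      using Full_below_i by simp
    then have "colours_from st j (SOME \<tau>. colours_from st j \<tau>)"
      using someI_ex[OF invar_colours_from[OF invar]] by blast
    then obtain c where "cur st x = (j, \<tau> j, c)"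
      using colours_from_Full[OF _ Full_below_i[OF j(1)] j(2)] j(1) unfolding \<tau>_def by auto
    then show ?thesis
      using False j(1) unfolding mid_cur_def by auto
  qed
  have "colours_from new_state i \<tau>"
    unfolding colours_from_def new_state_simps
  proof
    fix x assume "x \<in> new_sets i"
    then have x: "x \<in> merged"
      by (simp add: new_sets_def)
    then have fin: "new_fin x = (i, \<tau> i, f x)"
      by (simp add: new_fin_def \<tau>_def)
    moreover have "\<exists>j\<le>i. \<exists>c. new_cur x = (j, \<tau> j, c)"
      using new_cur_cases[of x] mid_cur_merged[OF x] fin by auto
    moreover have "new_status i = Full \<longrightarrow> new_cur x = new_fin x"
      using new_status_Full[of i] \<open>x \<in> new_sets i\<close> by (simp add: mid_status_def)
    ultimately show "(\<exists>c. new_fin x = (i, \<tau> i, c)) \<and> (\<exists>j\<le>i. \<exists>c. new_cur x = (j, \<tau> j, c)) \<and>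
        (new_status i = Full \<longrightarrow> new_cur x = new_fin x)"
      by blast
  qed
  then show ?thesis
    by blast
qed

lemma new_lower_i: "lower new_state i = {}"
  by (simp add: lower_def new_sets_def)

lemma new_lower_above:
  assumes "i < k"
  shows "lower new_state k = insert s (lower st k)"
proof
  show "lower new_state k \<subseteq> insert s (lower st k)"
    using assms by (auto simp: lower_def new_sets_def merged_def split: if_splits)
  have "sets st j \<subseteq> lower new_state k" if "j < k" for j
  proof (cases "j < i")
    case True
    then show ?thesis
      using assms by (force simp: lower_def new_sets_def merged_def)
  next
    case False
    then show ?thesis
      using that sets_i by (cases "j = i") (auto simp: lower_def new_sets_def)
  qed
  moreover have "s \<in> lower new_state k"
    using assms by (force simp: lower_def new_sets_def merged_def)
  ultimately show "insert s (lower st k) \<subseteq> lower new_state k"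
    by (auto simp: lower_def)
qed

lemma s_in_merged: "s \<in> merged"
  by (simp add: merged_def)

lemma new_pending_card_i: "card (pending new_state i) + card (lower new_state i) \<le> 2 ^ i - 1"
proof -
  have "pending new_state i \<subseteq> merged - {s}"
    using new_cur_cases[of s] by (auto simp: pending_def new_sets_def mid_cur_def new_fin_def merged_def)
  then have "card (pending new_state i) \<le> card (merged - {s})"
    using finite_merged by (intro card_mono) auto
  also have "\<dots> = 2 ^ i - 1"
    using card_merged card_Diff_singleton[OF s_in_merged] by simp
  finally show ?thesis
    by (simp add: new_lower_i)
qed

lemma new_pending_card_above:
  assumes "i < k" and Migr: "status st k = Migr"
  shows "card (pending new_state k) + card (lower new_state k) \<le> 2 ^ k - 1"
proof -
  have pending: "pending st k = {x \<in> new_sets k. mid_cur x \<noteq> new_fin x}"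
    using unchanged_above[OF assms(1)] assms(1) by (auto simp: pending_def new_sets_def)
  obtain x where "x \<in> pending st k"
    using invar_pending_nonempty[OF invar Migr] by blast
  then obtain p where p: "p \<in> pending st k" "new_cur p = new_fin p"
    using exists_finalised_pending[of k x] pending assms by (auto simp: mid_status_def)
  have "pending new_state k \<subseteq> pending st k - {p}"
  proof
    fix x assume "x \<in> pending new_state k"
    then have "x \<in> new_sets k" and "new_cur x \<noteq> new_fin x"
      by (auto simp: pending_def)
    then show "x \<in> pending st k - {p}"
      using new_cur_cases[of x] p(2) pending by auto
  qed
  moreover have "finite (pending st k)"
    using invar_finite[OF invar] by (simp add: pending_def)
  ultimately have "card (pending new_state k) < card (pending st k)"
    using p(1) by (intro psubset_card_mono) auto
  moreover have "card (lower new_state k) = Suc (card (lower st k))"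
    using new_lower_above[OF assms(1)] s_notin_sets invar_finite[OF invar]
    by (simp add: lower_def)
  ultimately show ?thesis
    using invar_pending_card[OF invar Migr] by linarith
qed

lemma new_status_Migr: "new_status k = Migr \<Longrightarrow> k = i \<or> (i < k \<and> status st k = Migr)"
  by (auto simp: new_status_def mid_status_def split: if_splits)

lemma new_pending_nonempty: "new_status k = Migr \<Longrightarrow> pending new_state k \<noteq> {}"
  by (auto simp: new_status_def pending_def split: if_splits)

lemma invar_new_state: "invar new_state"
proof -
  have "\<exists>\<tau>. colours_from new_state k \<tau>" if "new_status k \<noteq> Empty" for k
  proof -
    from that have "k = i \<or> (i < k \<and> status st k \<noteq> Empty)"
      by (auto simp: new_status_Empty_iff mid_status_def split: if_splits)
    then show ?thesis
      using new_colours_from_merged new_colours_from_above invar_colours_from[OF invar] by blast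
  qed
  moreover have "card (pending new_state k) + card (lower new_state k) \<le> 2 ^ k - 1"
    if "new_status k = Migr" for k
    using new_status_Migr[OF that] new_pending_card_i new_pending_card_above by blast
  ultimately show ?thesis
    unfolding invar_def new_state_simps
    using new_Empty_above new_Empty_iff new_finite new_card new_disjoint new_pending_nonempty
    by blast
qed

end

lemma invar_ins:
  assumes "invar st" and "s \<notin> objs st" and "ins R \<gamma> s st st'"
  shows "invar st'"
proof -
  obtain t f pick where "insertion_data.picks_pending st s t f pick"
    and st': "st' = insertion_data.new_state st s t f pick"
    using ins_new_state[OF assms(3)] by blast
  then interpret insertion st s t f pick
    using assms(1,2) by unfold_locales
  show ?thesis
    using invar_new_state st' by simp
qed

lemma invar_reach: "reach R \<gamma> l0 st \<Longrightarrow> invar st"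
  by (induction rule: reach.induct) (auto intro: invar_init invar_ins)

theorem mainTheorem9:
  fixes R :: "'q \<Rightarrow> 'o \<Rightarrow> bool" and \<gamma> :: "nat \<Rightarrow> nat" and l0 :: nat
    and st :: "'o state" and s :: 'o
  assumes "mono \<gamma>"
    and "\<And>X m. finite X \<Longrightarrow> card X = m \<Longrightarrow>
           \<exists>f. unimax R X f \<and> f ` X \<subseteq> {0..<\<gamma> m}"
    and "reach R \<gamma> l0 st"
    and "s \<notin> objs st"
  shows "\<exists>t \<le> max (lev st) (first_empty st) - first_empty st.
           \<not> used st (first_empty st) t"
  using unused_colour_set_exists[OF invar_reach[OF assms(3)]] .

end
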